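(* Let $\Bbbk$ be a field, $n\ge2$, $q\in\Bbbk$ a primitive $n$-th root of unity, $T_n(q)$ the Taft algebra and $A$ a unital associative $\Bbbk$-algebra. Let $\cdot:T_n(q)\otimes A\to A$ be a partial action of $T_n(q)$ on $A$. If $g\cdot 1_A=1_A$, then $\cdot$ is a global action.
   Context: The Taft algebra $T_n(q)$ is the Hopf algebra generated by $g,x$ with relations $g^n=1$, $x^n=0$, $xg=qgx$, $g$ group-like, $\Delta(x)=x\otimes1+g\otimes x$, $\varepsilon(x)=0$. For a bialgebra $H$ with $\Delta(h)=h_1\otimes h_2$, a partial action of $H$ on $A$ is a linear map $\cdot:H\otimes A\to A$ with $1_H\cdot a=a$, $h\cdot(ab)=(h_1\cdot a)(h_2\cdot b)$ and $h\cdot(k\cdot a)=(h_1\cdot1_A)(h_2k\cdot a)$ for all $h,k\in H$, $a,b\in A$. It is global if moreover $h\cdot(k\cdot a)=hk\cdot a$ for all $h,k,a$ (equivalently $h\cdot1_A=\varepsilon(h)1_A$ for all $h$). *)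

theory Defs
  imports Main
begin

definition k_algebra :: "('k::field \<Rightarrow> 'a::{ring,monoid_mult} \<Rightarrow> 'a) \<Rightarrow> bool" where
  "k_algebra sc \<longleftrightarrow>
     (\<forall>c d a. sc (c + d) a = sc c a + sc d a) \<and>
     (\<forall>c a b. sc c (a + b) = sc c a + sc c b) \<and>
     (\<forall>c d a. sc (c * d) a = sc c (sc d a)) \<and>
     (\<forall>a. sc 1 a = a) \<and>
     (\<forall>c a b. sc c (a * b) = sc c a * b) \<and>
     (\<forall>c a b. sc c (a * b) = a * sc c b)"

definition primitive_root :: "nat \<Rightarrow> 'k::field \<Rightarrow> bool" where
  "primitive_root n q \<longleftrightarrow> q ^ n = 1 \<and> (\<forall>k. 0 < k \<and> k < n \<longrightarrow> q ^ k \<noteq> 1)"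

fun qbinom :: "'k::field \<Rightarrow> nat \<Rightarrow> nat \<Rightarrow> 'k" where
  "qbinom q m 0 = 1"
| "qbinom q 0 (Suc k) = 0"
| "qbinom q (Suc m) (Suc k) = qbinom q m k + q ^ Suc k * qbinom q m (Suc k)"

text \<open>Elements of T_n(q) are represented by their coordinates with respect to the
 basis g^i x^j (0 \<le> i,j < n): a function c with c(i,j) the coefficient of g^i x^j,
 vanishing outside {0..<n} x {0..<n}. Elements of T_n(q) \<otimes> T_n(q) are
 represented likewise by coefficient functions on pairs of basis indices.\<close>

definition taft :: "nat \<Rightarrow> (nat \<times> nat \<Rightarrow> 'k::field) set" where
  "taft n = {h. \<forall>i j. (n \<le> i \<or> n \<le> j) \<longrightarrow> h (i, j) = 0}"

definition taft_basis :: "nat \<Rightarrow> nat \<Rightarrow> (nat \<times> nat \<Rightarrow> 'k::field)" where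
  "taft_basis i j = (\<lambda>p. if p = (i, j) then 1 else 0)"

definition taft_one :: "nat \<times> nat \<Rightarrow> 'k::field" where
  "taft_one = taft_basis 0 0"

text \<open>(g^a x^b)(g^c x^d) = q^(b c) g^((a+c) mod n) x^(b+d), which is 0 when b+d \<ge> n
 (since x^n = 0); this follows from x g = q g x and g^n = 1.\<close>
definition taft_bprod :: "nat \<Rightarrow> 'k::field \<Rightarrow> nat \<Rightarrow> nat \<Rightarrow> nat \<Rightarrow> nat \<Rightarrow> (nat \<times> nat \<Rightarrow> 'k)" where
  "taft_bprod n q a b c d =
     (\<lambda>p. if b + d < n \<and> p = ((a + c) mod n, b + d) then q ^ (b * c) else 0)"

definition taft_mult :: "nat \<Rightarrow> 'k::field \<Rightarrow> (nat \<times> nat \<Rightarrow> 'k) \<Rightarrow> (nat \<times> nat \<Rightarrow> 'k) \<Rightarrow> (nat \<times> nat \<Rightarrow> 'k)" where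
  "taft_mult n q h k =
     (\<lambda>p. \<Sum>u\<in>{..<n} \<times> {..<n}. \<Sum>v\<in>{..<n} \<times> {..<n}.
            h u * k v * taft_bprod n q (fst u) (snd u) (fst v) (snd v) p)"

text \<open>Comultiplication: \<Delta>(x) = x \<otimes> 1 + g \<otimes> x and g group-like give
 \<Delta>(g^i x^j) = \<Sum>_{k\<le>j} [j choose k]_q g^(i+k) x^(j-k) \<otimes> g^i x^k.\<close>
definition taft_bcomult :: "nat \<Rightarrow> 'k::field \<Rightarrow> nat \<Rightarrow> nat \<Rightarrow> ((nat \<times> nat) \<times> (nat \<times> nat) \<Rightarrow> 'k)" where
  "taft_bcomult n q i j =
     (\<lambda>(u, v). \<Sum>k\<in>{..j}. if u = ((i + k) mod n, j - k) \<and> v = (i, k) then qbinom q j k else 0)"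

definition taft_comult :: "nat \<Rightarrow> 'k::field \<Rightarrow> (nat \<times> nat \<Rightarrow> 'k) \<Rightarrow> ((nat \<times> nat) \<times> (nat \<times> nat) \<Rightarrow> 'k)" where
  "taft_comult n q h =
     (\<lambda>w. \<Sum>u\<in>{..<n} \<times> {..<n}. h u * taft_bcomult n q (fst u) (snd u) w)"

text \<open>A linear map T_n(q) \<otimes> A \<rightarrow> A is the same as a bilinear map
 act : T_n(q) \<times> A \<rightarrow> A.\<close>
definition taft_bilinear ::
  "nat \<Rightarrow> ('k::field \<Rightarrow> 'a::{ring,monoid_mult} \<Rightarrow> 'a) \<Rightarrow> ((nat \<times> nat \<Rightarrow> 'k) \<Rightarrow> 'a \<Rightarrow> 'a) \<Rightarrow> bool" where
  "taft_bilinear n sc act \<longleftrightarrow>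
     (\<forall>h\<in>taft n. \<forall>k\<in>taft n. \<forall>a. act (\<lambda>p. h p + k p) a = act h a + act k a) \<and>
     (\<forall>h\<in>taft n. \<forall>c a. act (\<lambda>p. c * h p) a = sc c (act h a)) \<and>
     (\<forall>h\<in>taft n. \<forall>a b. act h (a + b) = act h a + act h b) \<and>
     (\<forall>h\<in>taft n. \<forall>c a. act h (sc c a) = sc c (act h a))"

definition tensor_apply ::
  "nat \<Rightarrow> ('k::field \<Rightarrow> 'a \<Rightarrow> 'a::{ring,monoid_mult}) \<Rightarrow> ((nat \<times> nat) \<times> (nat \<times> nat) \<Rightarrow> 'k)
     \<Rightarrow> ((nat \<times> nat \<Rightarrow> 'k) \<Rightarrow> (nat \<times> nat \<Rightarrow> 'k) \<Rightarrow> 'a) \<Rightarrow> 'a" where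
  "tensor_apply n sc F f =
     (\<Sum>u\<in>{..<n} \<times> {..<n}. \<Sum>v\<in>{..<n} \<times> {..<n}.
        sc (F (u, v)) (f (taft_basis (fst u) (snd u)) (taft_basis (fst v) (snd v))))"

definition taft_partial_action ::
  "nat \<Rightarrow> 'k::field \<Rightarrow> ('k \<Rightarrow> 'a::{ring,monoid_mult} \<Rightarrow> 'a) \<Rightarrow> ((nat \<times> nat \<Rightarrow> 'k) \<Rightarrow> 'a \<Rightarrow> 'a) \<Rightarrow> bool" where
  "taft_partial_action n q sc act \<longleftrightarrow>
     taft_bilinear n sc act \<and>
     (\<forall>a. act taft_one a = a) \<and>
     (\<forall>h\<in>taft n. \<forall>a b.
        act h (a * b) = tensor_apply n sc (taft_comult n q h) (\<lambda>h1 h2. act h1 a * act h2 b)) \<and>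
     (\<forall>h\<in>taft n. \<forall>k\<in>taft n. \<forall>a.
        act h (act k a) =
          tensor_apply n sc (taft_comult n q h) (\<lambda>h1 h2. act h1 1 * act (taft_mult n q h2 k) a))"

definition taft_global_action ::
  "nat \<Rightarrow> 'k::field \<Rightarrow> ('k \<Rightarrow> 'a::{ring,monoid_mult} \<Rightarrow> 'a) \<Rightarrow> ((nat \<times> nat \<Rightarrow> 'k) \<Rightarrow> 'a \<Rightarrow> 'a) \<Rightarrow> bool" where
  "taft_global_action n q sc act \<longleftrightarrow>
     taft_partial_action n q sc act \<and>
     (\<forall>h\<in>taft n. \<forall>k\<in>taft n. \<forall>a. act h (act k a) = act (taft_mult n q h k) a)"

end

theory Submission
  imports Defs
begin

(* Since \<Delta>(g^i x^j) = \<Sum>_k [j choose k]_q g^(i+k) x^(j-k) \<otimes> g^i x^k, the partial action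
   axiom reads g^i x^j \<cdot> (y \<cdot> a) = \<Sum>_k [j choose k]_q (g^(i+k) x^(j-k) \<cdot> 1) (g^i x^k y \<cdot> a);
   so the action is global as soon as h \<cdot> 1 = \<epsilon>(h) 1, i.e. g^i x^j \<cdot> 1 = \<delta>_(j,0), and then
   only the term k = j survives.  This is forced by g \<cdot> 1 = 1: as g is group-like,
   g^(i+1) \<cdot> 1 = (g \<cdot> 1)(g^(i+1) \<cdot> 1) = g \<cdot> (g^i \<cdot> 1) = 1; multiplicativity and
   \<Delta>(x) = x \<otimes> 1 + g \<otimes> x give x \<cdot> 1 = 2 (x \<cdot> 1) = 0; finally
   x \<cdot> (g^i x^j \<cdot> 1) = q^i (g^i x^(j+1) \<cdot> 1), and q \<noteq> 0 lets an induction on j conclude. *)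

lemma sum_sum_delta:
  assumes "finite A" "finite B" "a \<in> A" "b \<in> B"
  shows "(\<Sum>x\<in>A. \<Sum>y\<in>B. if x = a \<and> y = b then f x y else 0) = f a b"
proof -
  have "(\<Sum>y\<in>B. if x = a \<and> y = b then f x y else 0) = (if x = a then f x b else 0)" for x
    using assms by (cases "x = a") (simp_all add: sum.delta')
  then show ?thesis
    using assms by (simp add: sum.delta')
qed

locale k_algebra_scaling =
  fixes sc :: "'k::field \<Rightarrow> 'a::{ring,monoid_mult} \<Rightarrow> 'a"
  assumes k_algebra: "k_algebra sc"
begin

lemma scale_add_left: "sc (c + d) a = sc c a + sc d a"
  using k_algebra unfolding k_algebra_def by blast

lemma scale_add_right: "sc c (a + b) = sc c a + sc c b"
  using k_algebra unfolding k_algebra_def by blast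

lemma scale_scale: "sc c (sc d a) = sc (c * d) a"
  using k_algebra unfolding k_algebra_def by metis

lemma scale_one [simp]: "sc 1 a = a"
  using k_algebra unfolding k_algebra_def by blast

lemma scale_zero_left [simp]: "sc 0 a = 0"
  using scale_add_left[of 0 0 a] by simp

lemma scale_zero_right [simp]: "sc c 0 = 0"
  using scale_add_right[of c 0 0] by simp

lemma scale_sum_left: "sc (\<Sum>v\<in>S. c v) a = (\<Sum>v\<in>S. sc (c v) a)"
  by (induction S rule: infinite_finite_induct) (simp_all add: scale_add_left)

lemma scale_eq_0_iff: "c \<noteq> 0 \<Longrightarrow> sc c a = 0 \<longleftrightarrow> a = 0"
  using scale_scale[of "inverse c" c a] by auto

end

lemma taft_basis_in_taft: "i < n \<Longrightarrow> j < n \<Longrightarrow> taft_basis i j \<in> taft n"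
  unfolding taft_def taft_basis_def by auto

lemma taft_mult_in_taft:
  assumes "0 < n"
  shows "taft_mult n q h k \<in> taft n"
proof -
  have "\<not> n \<le> x mod n" for x
    using assms by (simp add: not_le)
  then show ?thesis
    unfolding taft_def taft_mult_def taft_bprod_def by (auto intro!: sum.neutral)
qed

lemma taft_basis_expansion:
  assumes "h \<in> taft n"
  shows "h = (\<lambda>p. \<Sum>w\<in>{..<n} \<times> {..<n}. h w * taft_basis (fst w) (snd w) p)"
proof
  fix p :: "nat \<times> nat"
  have "(\<Sum>w\<in>{..<n} \<times> {..<n}. h w * taft_basis (fst w) (snd w) p)
      = (if p \<in> {..<n} \<times> {..<n} then h p else 0)"
    by (simp add: taft_basis_def if_distrib sum.delta' cong: if_cong)
  also have "\<dots> = h p"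
    using assms unfolding taft_def by (cases p) auto
  finally show "h p = (\<Sum>w\<in>{..<n} \<times> {..<n}. h w * taft_basis (fst w) (snd w) p)" by simp
qed

lemma taft_basis_times: "taft_basis i j p * x = (if p = (i, j) then x else 0)"
  by (simp add: taft_basis_def)

lemma taft_mult_basis_left:
  assumes "w \<in> {..<n} \<times> {..<n}"
  shows "taft_mult n q (taft_basis (fst w) (snd w)) k
       = (\<lambda>p. \<Sum>v\<in>{..<n} \<times> {..<n}. k v * taft_bprod n q (fst w) (snd w) (fst v) (snd v) p)"
  using assms unfolding taft_mult_def mult.assoc sum_distrib_left[symmetric]
  by (simp add: taft_basis_times prod_eq_iff[symmetric] sum.delta')

lemma taft_mult_expansion_left:
  "taft_mult n q h k
     = (\<lambda>p. \<Sum>w\<in>{..<n} \<times> {..<n}. h w * taft_mult n q (taft_basis (fst w) (snd w)) k p)"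
  unfolding taft_mult_def[of n q h k]
  by (simp add: taft_mult_basis_left sum_distrib_left mult.assoc cong: sum.cong)

lemma taft_mult_basis:
  assumes "a < n" "b < n" "c < n" "d < n" "b + d < n"
  shows "taft_mult n q (taft_basis a b) (taft_basis c d)
       = (\<lambda>p. q ^ (b * c) * taft_basis ((a + c) mod n) (b + d) p)"
  using assms taft_mult_basis_left[of "(a, b)" n q "taft_basis c d"]
  by (simp add: taft_basis_times sum.delta' taft_bprod_def) (simp add: taft_basis_def fun_eq_iff)

lemma taft_comult_basis:
  "i < n \<Longrightarrow> j < n \<Longrightarrow> taft_comult n q (taft_basis i j) = taft_bcomult n q i j"
  unfolding taft_comult_def by (simp add: taft_basis_times prod_eq_iff[symmetric] sum.delta')

lemma qbinom_eq_0: "m < k \<Longrightarrow> qbinom q m k = 0"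
  by (induction q m k rule: qbinom.induct) auto

lemma qbinom_same [simp]: "qbinom q m m = 1"
  by (induction m) (simp_all add: qbinom_eq_0)

context k_algebra_scaling
begin

lemma tensor_apply_comult_basis:
  assumes "0 < n" "i < n" "j < n"
  shows "tensor_apply n sc (taft_comult n q (taft_basis i j)) f
       = (\<Sum>k\<le>j. sc (qbinom q j k) (f (taft_basis ((i + k) mod n) (j - k)) (taft_basis i k)))"
proof -
  let ?N = "{..<n} \<times> {..<n}"
  let ?f = "\<lambda>u v. f (taft_basis (fst u) (snd u)) (taft_basis (fst v) (snd v))"
  have "tensor_apply n sc (taft_comult n q (taft_basis i j)) f
      = (\<Sum>u\<in>?N. \<Sum>v\<in>?N. \<Sum>k\<le>j.
           if u = ((i + k) mod n, j - k) \<and> v = (i, k) then sc (qbinom q j k) (?f u v) else 0)"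
    using assms unfolding tensor_apply_def taft_comult_basis[OF assms(2,3)] taft_bcomult_def
    by (simp add: scale_sum_left if_distrib[of "\<lambda>c. sc c _"] cong: if_cong)
  also have "\<dots> = (\<Sum>k\<le>j. \<Sum>u\<in>?N. \<Sum>v\<in>?N.
           if u = ((i + k) mod n, j - k) \<and> v = (i, k) then sc (qbinom q j k) (?f u v) else 0)"
    by (simp only: sum.swap[of _ "{..j}"])
  also have "\<dots> = (\<Sum>k\<le>j. sc (qbinom q j k) (f (taft_basis ((i + k) mod n) (j - k)) (taft_basis i k)))"
    using assms by (intro sum.cong refl) (simp add: sum_sum_delta)
  finally show ?thesis .
qed

end

locale taft_bilinear_action = k_algebra_scaling sc
  for sc :: "'k::field \<Rightarrow> 'a::{ring,monoid_mult} \<Rightarrow> 'a" +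
  fixes n :: nat and act :: "(nat \<times> nat \<Rightarrow> 'k) \<Rightarrow> 'a \<Rightarrow> 'a"
  assumes bilinear: "taft_bilinear n sc act"
begin

lemma act_add_left: "h \<in> taft n \<Longrightarrow> k \<in> taft n \<Longrightarrow> act (\<lambda>p. h p + k p) a = act h a + act k a"
  using bilinear unfolding taft_bilinear_def by blast

lemma act_scale_left: "h \<in> taft n \<Longrightarrow> act (\<lambda>p. c * h p) a = sc c (act h a)"
  using bilinear unfolding taft_bilinear_def by blast

lemma act_add_right: "h \<in> taft n \<Longrightarrow> act h (a + b) = act h a + act h b"
  using bilinear unfolding taft_bilinear_def by blast

lemma act_zero_right: "h \<in> taft n \<Longrightarrow> act h 0 = 0"
  using act_add_right[of h 0 0] by simp

lemma act_zero_left: "act (\<lambda>p. 0) a = 0"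
proof -
  have "(\<lambda>p. 0) \<in> taft n"
    unfolding taft_def by simp
  then show ?thesis
    using act_scale_left[of "\<lambda>p. 0" 0 a] by simp
qed

lemma act_lincomb_left:
  "(\<And>v. v \<in> S \<Longrightarrow> f v \<in> taft n)
     \<Longrightarrow> act (\<lambda>p. \<Sum>v\<in>S. c v * f v p) a = (\<Sum>v\<in>S. sc (c v) (act (f v) a))"
proof (induction S rule: infinite_finite_induct)
  case (insert v S)
  have "(\<lambda>p. c v * f v p) \<in> taft n" "(\<lambda>p. \<Sum>v\<in>S. c v * f v p) \<in> taft n"
    using insert.prems by (auto simp: taft_def)
  then have "act (\<lambda>p. \<Sum>v\<in>insert v S. c v * f v p) a
      = act (\<lambda>p. c v * f v p) a + act (\<lambda>p. \<Sum>v\<in>S. c v * f v p) a"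
    using insert.hyps by (simp add: act_add_left[symmetric])
  then show ?case
    using insert by (simp add: act_scale_left)
qed (simp_all add: act_zero_left)

lemma act_basis_expansion:
  "h \<in> taft n \<Longrightarrow> act h a = (\<Sum>w\<in>{..<n} \<times> {..<n}. sc (h w) (act (taft_basis (fst w) (snd w)) a))"
  by (subst taft_basis_expansion, assumption, rule act_lincomb_left) (auto intro: taft_basis_in_taft)

end

locale taft_partial = k_algebra_scaling sc
  for sc :: "'k::field \<Rightarrow> 'a::{ring,monoid_mult} \<Rightarrow> 'a" +
  fixes n :: nat and q :: 'k and act :: "(nat \<times> nat \<Rightarrow> 'k) \<Rightarrow> 'a \<Rightarrow> 'a"
  assumes partial: "taft_partial_action n q sc act"
    and n_pos: "0 < n"

sublocale taft_partial \<subseteq> taft_bilinear_action sc n act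
  using partial by unfold_locales (simp add: taft_partial_action_def)

context taft_partial
begin

lemma act_unit_left: "act (taft_basis 0 0) a = a"
  using partial unfolding taft_partial_action_def taft_one_def by blast

lemma act_basis_mult:
  assumes "i < n" "j < n"
  shows "act (taft_basis i j) (a * b)
       = (\<Sum>k\<le>j. sc (qbinom q j k) (act (taft_basis ((i + k) mod n) (j - k)) a * act (taft_basis i k) b))"
  using partial assms n_pos
  by (simp add: taft_partial_action_def taft_basis_in_taft tensor_apply_comult_basis)

lemma act_basis_act:
  assumes "i < n" "j < n" "k \<in> taft n"
  shows "act (taft_basis i j) (act k a)
       = (\<Sum>l\<le>j. sc (qbinom q j l)
            (act (taft_basis ((i + l) mod n) (j - l)) 1 * act (taft_mult n q (taft_basis i l) k) a))"
  using partial assms n_pos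
  by (simp add: taft_partial_action_def taft_basis_in_taft tensor_apply_comult_basis)

lemma act_mult_basis:
  assumes "a < n" "b < n" "c < n" "d < n" "b + d < n"
  shows "act (taft_mult n q (taft_basis a b) (taft_basis c d)) x
       = sc (q ^ (b * c)) (act (taft_basis ((a + c) mod n) (b + d)) x)"
  using assms n_pos by (simp add: taft_mult_basis act_scale_left taft_basis_in_taft)

lemma taft_global_action_if_counital:
  \<comment> \<open>the hypothesis is h \<cdot> 1 = \<epsilon>(h) 1 on the basis g^i x^j\<close>
  assumes counit: "\<And>i j. i < n \<Longrightarrow> j < n \<Longrightarrow> act (taft_basis i j) 1 = (if j = 0 then 1 else 0)"
  shows "taft_global_action n q sc act"
proof -
  have basis_case: "act (taft_basis i j) (act k a) = act (taft_mult n q (taft_basis i j) k) a"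
    if "i < n" "j < n" "k \<in> taft n" for i j k a
  proof -
    have "act (taft_basis i j) (act k a)
        = (\<Sum>l\<le>j. if l = j then act (taft_mult n q (taft_basis i l) k) a else 0)"
      unfolding act_basis_act[OF that] using that n_pos
      by (intro sum.cong) (auto simp: counit qbinom_eq_0)
    then show ?thesis
      by simp
  qed
  have "act h (act k a) = act (taft_mult n q h k) a" if "h \<in> taft n" "k \<in> taft n" for h k a
  proof -
    have "act h (act k a)
        = (\<Sum>w\<in>{..<n} \<times> {..<n}. sc (h w) (act (taft_mult n q (taft_basis (fst w) (snd w)) k) a))"
      using that by (subst act_basis_expansion[of h]) (auto simp: basis_case intro!: sum.cong)
    also have "\<dots> = act (taft_mult n q h k) a"
      by (subst taft_mult_expansion_left, rule act_lincomb_left[symmetric])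
        (simp add: taft_mult_in_taft n_pos)
    finally show ?thesis .
  qed
  then show ?thesis
    using partial unfolding taft_global_action_def by blast
qed

context
  assumes n_ge_2: "2 \<le> n"
    and act_g_one: "act (taft_basis 1 0) 1 = 1"
begin

lemma act_g_power_one: "i < n \<Longrightarrow> act (taft_basis i 0) 1 = 1"
proof (induction i)
  case 0
  show ?case by (rule act_unit_left)
next
  case (Suc i)
  have "act (taft_basis (Suc i) 0) 1 = act (taft_basis 1 0) (act (taft_basis i 0) 1)"
    using Suc.prems n_ge_2 act_g_one
    by (simp add: act_basis_act act_mult_basis taft_basis_in_taft)
  then show ?case
    using Suc act_g_one by simp
qed

lemma act_x_one: "act (taft_basis 0 1) 1 = 0"
proof -
  have "{..1::nat} = {0, 1}" by auto
  then show ?thesis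
    using act_basis_mult[of 0 1 1 1] n_ge_2 act_g_one by (simp add: act_unit_left)
qed

lemma act_x_act_basis_one:
  assumes "i < n" "Suc j < n"
  shows "act (taft_basis 0 1) (act (taft_basis i j) 1) = sc (q ^ i) (act (taft_basis i (Suc j)) 1)"
proof -
  have "{..1::nat} = {0, 1}" by auto
  then show ?thesis
    using assms n_ge_2 act_g_one act_x_one
    by (simp add: act_basis_act act_mult_basis taft_basis_in_taft)
qed

lemma act_basis_one:
  assumes "q \<noteq> 0" "i < n" "j < n"
  shows "act (taft_basis i j) 1 = (if j = 0 then 1 else 0)"
  using assms(3)
proof (induction j)
  case 0
  show ?case using assms(2) by (simp add: act_g_power_one)
next
  case (Suc j)
  have "act (taft_basis 0 1) (act (taft_basis i j) 1) = 0"
    using Suc assms(2) n_ge_2 act_x_one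
    by (simp add: act_g_power_one act_zero_right taft_basis_in_taft)
  then show ?case
    using act_x_act_basis_one[OF assms(2) Suc.prems] assms(1) by (simp add: scale_eq_0_iff)
qed

end

end

theorem proposition3p2:
  fixes n :: nat and q :: "'k::field"
    and sc :: "'k \<Rightarrow> 'a::{ring,monoid_mult} \<Rightarrow> 'a"
    and act :: "(nat \<times> nat \<Rightarrow> 'k) \<Rightarrow> 'a \<Rightarrow> 'a"
  assumes "2 \<le> n"
    and "primitive_root n q"
    and "k_algebra sc"
    and "taft_partial_action n q sc act"
    and "act (taft_basis 1 0) 1 = 1"
  shows "taft_global_action n q sc act"
proof -
  interpret taft_partial sc n q act
    using assms(1,3,4) by unfold_locales simp_all
  have "q \<noteq> 0"
    using assms(1,2) unfolding primitive_root_def by (metis not_numeral_le_zero power_0_left zero_neq_one)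
  then show ?thesis
    using assms(1,5) by (intro taft_global_action_if_counital act_basis_one)
qed

end
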